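(* Let $p$ be a prime and $d\ge0$ an integer. If $S_1,S_2\subseteq{\mathbb N}$ are both $p$-normal of order $\le d$, then $S_1\cap S_2$ is $p$-normal of order $\le d$.
   Context: ${\mathbb N}=\{0,1,2,\dots\}$. An infinite arithmetic progression is $m+n{\mathbb N}$ with $m\in{\mathbb N}$, $n\ge1$. Let $q$ be a power of $p$. For $r\ge1$ and $c_0,\dots,c_r\in{\mathbb Q}$ with $(q-1)c_i\in{\mathbb Z}$, $c_0+\cdots+c_r\in{\mathbb Z}$, $c_i\ne0$ for $1\le i\le r$ and $c_i>0$ for some $1\le i\le r$, the set $S_q(c_0;c_1,\dots,c_r)=\{c_0+\sum_{i=1}^rc_iq^{k_i}\mid k_i\in{\mathbb N}\}\cap{\mathbb N}$ is an elementary $p$-nested set of order $r$. A $p$-nested set of order $\le k$ is the union of a finite set and finitely many elementary $p$-nested sets (possibly for different powers $q$ of $p$) of orders $\le k$. A set $S\subseteq{\mathbb N}$ is $p$-normal of order $\le k$ if there are a $p$-nested set $B$ of order $\le k$ and finitely many infinite arithmetic progressions $A_1,\dots,A_s$ such that $S$ and $B\cup A_1\cup\cdots\cup A_s$ have finite symmetric difference. *)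

theory Defs
  imports Complex_Main "HOL-Computational_Algebra.Primes"
begin

definition Sq :: "nat \<Rightarrow> nat \<Rightarrow> (nat \<Rightarrow> rat) \<Rightarrow> nat set" where
  "Sq q r c = {n::nat. \<exists>ks::nat \<Rightarrow> nat.
      of_nat n = c 0 + (\<Sum>i=1..r. c i * of_nat q ^ ks i)}"

definition elem_p_nested :: "nat \<Rightarrow> nat \<Rightarrow> nat set \<Rightarrow> bool" where
  "elem_p_nested p r S \<longleftrightarrow> (\<exists>e q c. e \<ge> 1 \<and> q = p ^ e \<and> r \<ge> 1 \<and>
      (\<forall>i\<in>{0..r}. (of_nat q - 1) * c i \<in> \<int>) \<and>
      (\<Sum>i=0..r. c i) \<in> \<int> \<and>
      (\<forall>i\<in>{1..r}. c i \<noteq> 0) \<and>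
      (\<exists>i\<in>{1..r}. c i > 0) \<and>
      S = Sq q r c)"

definition p_nested :: "nat \<Rightarrow> nat \<Rightarrow> nat set \<Rightarrow> bool" where
  "p_nested p k B \<longleftrightarrow> (\<exists>F Ss. finite F \<and> finite Ss \<and>
      (\<forall>S\<in>Ss. \<exists>r\<le>k. elem_p_nested p r S) \<and> B = F \<union> \<Union>Ss)"

definition inf_arith_prog :: "nat set \<Rightarrow> bool" where
  "inf_arith_prog A \<longleftrightarrow> (\<exists>m n. n \<ge> 1 \<and> A = {m + n * j | j. True})"

definition p_normal :: "nat \<Rightarrow> nat \<Rightarrow> nat set \<Rightarrow> bool" where
  "p_normal p k S \<longleftrightarrow> (\<exists>B As. p_nested p k B \<and> finite As \<and>
      (\<forall>A\<in>As. inf_arith_prog A) \<and>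
      finite ((S - (B \<union> \<Union>As)) \<union> ((B \<union> \<Union>As) - S)))"

end

theory Submission
  imports Defs "HOL-Library.FuncSet"
begin

text \<open>An element of the intersection of two sets \<open>S\<^sub>q\<close> over a common base \<open>q\<close> yields a solution of an
  equation \<open>e0 + \<Sum>e i * q ^ x i = 0\<close>.  Its solutions follow finitely many patterns: the terms split
  into fixed terms and clusters of vanishing sum whose exponents move together (induction on the
  number of terms, removing one of minimal exponent).  Along each pattern the first representation
  becomes a set \<open>S\<^sub>q\<close> with one coefficient per cluster, hence with no more terms, so \<open>p\<close>-nested sets
  of order \<open>\<le> d\<close> are closed under intersection; different bases \<open>p ^ e1\<close>, \<open>p ^ e2\<close> are first
  rewritten over \<open>p ^ (e1 * e2)\<close>.  A \<open>p\<close>-nested set meets a progression \<open>m + n\<nat>\<close> in a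
  \<open>p\<close>-nested set up to finitely many elements: splitting the exponents along an eventual period
  of \<open>q ^ k mod (q - 1) * n\<close> cuts \<open>S\<^sub>q\<close> into pieces each lying in one residue class modulo \<open>n\<close>.
  Since two progressions meet in a progression or not at all, distributing
  \<open>(B\<^sub>1 \<union> \<Union>As\<^sub>1) \<inter> (B\<^sub>2 \<union> \<Union>As\<^sub>2)\<close> proves the theorem.\<close>

section \<open>Sets \<open>S\<^sub>q\<close> over arbitrary index sets\<close>

text \<open>\<open>Sq_on q J c0 c\<close> is \<open>S\<^sub>q(c0; c)\<close> with coefficients indexed by any set \<open>J\<close>; unlike in
  \<^const>\<open>elem_p_nested\<close>, coefficients may vanish and none need be positive.\<close>

definition Sq_on :: "nat \<Rightarrow> 'j set \<Rightarrow> rat \<Rightarrow> ('j \<Rightarrow> rat) \<Rightarrow> nat set" where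
  "Sq_on q J c0 c = {n. \<exists>k::'j \<Rightarrow> nat. of_nat n = c0 + (\<Sum>j\<in>J. c j * of_nat q ^ k j)}"

definition admissible :: "nat \<Rightarrow> 'j set \<Rightarrow> rat \<Rightarrow> ('j \<Rightarrow> rat) \<Rightarrow> bool" where
  "admissible q J c0 c \<longleftrightarrow> (\<forall>j\<in>J. (of_nat q - 1) * c j \<in> \<int>) \<and> c0 + sum c J \<in> \<int>"

lemma Sq_eq_Sq_on: "Sq q r c = Sq_on q {1..r} (c 0) c"
  by (simp add: Sq_def Sq_on_def)

lemma Sq_on_cong:
  assumes "\<And>k. (\<Sum>j\<in>J. c j * of_nat q ^ k j) = (\<Sum>j\<in>J'. c' j * of_nat q ^ k j)"
  shows "Sq_on q J c0 c = Sq_on q J' c0 c'"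
  using assms by (simp add: Sq_on_def)

lemma Sq_on_reindex:
  assumes "bij_betw g K J"
  shows "Sq_on q J c0 c = Sq_on q K c0 (c \<circ> g)"
proof (intro set_eqI iffI)
  fix n assume "n \<in> Sq_on q J c0 c"
  then obtain k where "of_nat n = c0 + (\<Sum>j\<in>J. c j * of_nat q ^ k j)"
    by (auto simp: Sq_on_def)
  moreover have "(\<Sum>j\<in>J. c j * of_nat q ^ k j) = (\<Sum>i\<in>K. (c \<circ> g) i * of_nat q ^ (k \<circ> g) i)"
    using sum.reindex_bij_betw[OF assms, of "\<lambda>j. c j * of_nat q ^ k j"] by simp
  ultimately show "n \<in> Sq_on q K c0 (c \<circ> g)"
    unfolding Sq_on_def by (intro CollectI exI[of _ "k \<circ> g"]) simp
next
  fix n assume "n \<in> Sq_on q K c0 (c \<circ> g)"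
  then obtain k where "of_nat n = c0 + (\<Sum>i\<in>K. (c \<circ> g) i * of_nat q ^ k i)"
    by (auto simp: Sq_on_def)
  moreover have "(\<Sum>i\<in>K. (c \<circ> g) i * of_nat q ^ k i) =
      (\<Sum>j\<in>J. c j * of_nat q ^ k (inv_into K g j))"
    using sum.reindex_bij_betw[OF assms, of "\<lambda>j. c j * of_nat q ^ k (inv_into K g j)"]
    by (simp add: bij_betw_inv_into_left[OF assms])
  ultimately show "n \<in> Sq_on q J c0 c"
    unfolding Sq_on_def by (intro CollectI exI[of _ "\<lambda>j. k (inv_into K g j)"]) simp
qed

lemma Sq_on_nonzero_coeffs:
  assumes "finite J"
  shows "Sq_on q J c0 c = Sq_on q {j\<in>J. c j \<noteq> 0} c0 c"
  by (rule Sq_on_cong, rule sum.mono_neutral_right) (use assms in auto)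

lemma Sq_on_nonpos_coeffs_finite:
  assumes "\<forall>j\<in>J. c j \<le> 0"
  shows "finite (Sq_on q J c0 c)"
proof (rule finite_subset)
  show "Sq_on q J c0 c \<subseteq> {..nat \<lceil>c0\<rceil>}"
  proof
    fix n assume "n \<in> Sq_on q J c0 c"
    then obtain k where n: "of_nat n = c0 + (\<Sum>j\<in>J. c j * of_nat q ^ k j)"
      by (auto simp: Sq_on_def)
    have "(\<Sum>j\<in>J. c j * of_nat q ^ k j) \<le> 0"
      using assms by (intro sum_nonpos) (simp add: mult_nonpos_nonneg)
    then have "of_int (int n) \<le> c0"
      using n by simp
    then show "n \<in> {..nat \<lceil>c0\<rceil>}"
      by (simp add: le_nat_iff le_ceiling_iff)
  qed
qed simp

lemma power_shift_Ints:
  fixes a :: "'a::comm_ring_1"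
  assumes "(of_nat q - 1) * a \<in> \<int>"
  shows "a * of_nat q ^ k - a \<in> \<int>"
proof -
  have "a * of_nat q ^ k - a = a * (of_nat q ^ k - 1)"
    by (simp add: algebra_simps)
  also have "\<dots> = ((of_nat q - 1) * a) * (\<Sum>i<k. of_nat q ^ i)"
    by (simp only: power_diff_1_eq) (simp add: algebra_simps)
  also have "\<dots> \<in> \<int>"
    by (rule Ints_mult[OF assms Ints_sum]) auto
  finally show ?thesis .
qed

lemma admissible_value_Ints:
  assumes "admissible q J c0 c"
  shows "c0 + (\<Sum>j\<in>J. c j * of_nat q ^ k j) \<in> \<int>"
proof -
  have "c0 + (\<Sum>j\<in>J. c j * of_nat q ^ k j) = (c0 + sum c J) + (\<Sum>j\<in>J. c j * of_nat q ^ k j - c j)"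
    by (simp add: sum_subtractf)
  also have "\<dots> \<in> \<int>"
  proof (rule Ints_add)
    show "c0 + sum c J \<in> \<int>"
      using assms by (simp add: admissible_def)
    show "(\<Sum>j\<in>J. c j * of_nat q ^ k j - c j) \<in> \<int>"
      using assms by (intro Ints_sum power_shift_Ints) (simp add: admissible_def)
  qed
  finally show ?thesis .
qed

lemma admissible_const_Ints:
  assumes "admissible q J c0 c" "finite J"
  shows "(of_nat q - 1) * c0 \<in> \<int>"
proof -
  have "(of_nat q - 1) * c0 = (of_nat q - 1) * (c0 + sum c J) - (\<Sum>j\<in>J. (of_nat q - 1) * c j)"
    using sum_distrib_left[of "of_nat q - 1" c J, symmetric] by (simp add: algebra_simps)
  also have "\<dots> \<in> \<int>"
  proof (rule Ints_diff)
    show "(of_nat q - 1) * (c0 + sum c J) \<in> \<int>"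
      using assms(1) by (intro Ints_mult) (auto simp: admissible_def)
    show "(\<Sum>j\<in>J. (of_nat q - 1) * c j) \<in> \<int>"
      using assms(1) by (intro Ints_sum) (simp add: admissible_def)
  qed
  finally show ?thesis .
qed

lemma admissible_nonzero_coeffs:
  assumes "admissible q J c0 c" "finite J"
  shows "admissible q {j\<in>J. c j \<noteq> 0} c0 c"
proof -
  have "sum c J = sum c {j\<in>J. c j \<noteq> 0}"
    by (rule sum.mono_neutral_right) (use assms(2) in auto)
  then show ?thesis
    using assms(1) by (simp add: admissible_def)
qed

lemma p_nested_finite: "finite F \<Longrightarrow> p_nested p k F"
  unfolding p_nested_def by (intro exI[of _ F] exI[of _ "{}"]) auto

lemma p_nested_elem: "elem_p_nested p r S \<Longrightarrow> r \<le> k \<Longrightarrow> p_nested p k S"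
  unfolding p_nested_def by (intro exI[of _ "{}"] exI[of _ "{S}"]) auto

lemma p_nested_Un:
  assumes "p_nested p k A" "p_nested p k B"
  shows "p_nested p k (A \<union> B)"
proof -
  from assms obtain F1 Ss1 F2 Ss2 where
    "finite F1" "finite Ss1" "\<forall>S\<in>Ss1. \<exists>r\<le>k. elem_p_nested p r S" "A = F1 \<union> \<Union>Ss1"
    "finite F2" "finite Ss2" "\<forall>S\<in>Ss2. \<exists>r\<le>k. elem_p_nested p r S" "B = F2 \<union> \<Union>Ss2"
    unfolding p_nested_def by metis
  then show ?thesis
    unfolding p_nested_def by (intro exI[of _ "F1 \<union> F2"] exI[of _ "Ss1 \<union> Ss2"]) auto
qed

lemma p_nested_Union:
  assumes "finite X" "\<And>A. A \<in> X \<Longrightarrow> p_nested p k A"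
  shows "p_nested p k (\<Union>X)"
  using assms by (induction X rule: finite_induct) (auto simp: p_nested_finite p_nested_Un)

lemma p_nested_Int_if_elem_Int:
  assumes "p_nested p k B" "\<And>S r. elem_p_nested p r S \<Longrightarrow> r \<le> k \<Longrightarrow> p_nested p k (S \<inter> X)"
  shows "p_nested p k (B \<inter> X)"
proof -
  obtain F Ss where B: "finite F" "finite Ss" "\<forall>S\<in>Ss. \<exists>r\<le>k. elem_p_nested p r S" "B = F \<union> \<Union>Ss"
    using assms(1) unfolding p_nested_def by blast
  have "B \<inter> X = (F \<inter> X) \<union> \<Union>((\<lambda>S. S \<inter> X) ` Ss)"
    using B(4) by auto
  also have "p_nested p k \<dots>"
  proof (rule p_nested_Un)
    show "p_nested p k (F \<inter> X)"
      using B(1) by (simp add: p_nested_finite)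
    show "p_nested p k (\<Union>((\<lambda>S. S \<inter> X) ` Ss))"
      using B(2,3) assms(2) by (intro p_nested_Union) auto
  qed
  finally show ?thesis .
qed

lemma elem_p_nested_Sq_on:
  assumes "elem_p_nested p r S"
  obtains e c where "e \<ge> 1" "r \<ge> 1" "admissible (p ^ e) {1..r} (c 0) c"
    "S = Sq_on (p ^ e) {1..r} (c 0) c"
proof -
  from assms obtain e c where c: "e \<ge> 1" "r \<ge> 1"
      "\<forall>i\<in>{0..r}. (of_nat (p ^ e) - 1) * c i \<in> \<int>" "(\<Sum>i=0..r. c i) \<in> \<int>" "S = Sq (p ^ e) r c"
    unfolding elem_p_nested_def by blast
  have "(\<Sum>i=0..r. c i) = c 0 + sum c {1..r}"
    by (simp add: sum.atLeast_Suc_atMost)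
  with c have "admissible (p ^ e) {1..r} (c 0) c"
    unfolding admissible_def by auto
  with c show thesis
    using that by (simp add: Sq_eq_Sq_on)
qed

lemma elem_p_nested_Sq_onI:
  assumes "e \<ge> 1" "finite J" "admissible (p ^ e) J c0 c"
    and "\<forall>j\<in>J. c j \<noteq> 0" "\<exists>j\<in>J. c j > 0"
  shows "elem_p_nested p (card J) (Sq_on (p ^ e) J c0 c)"
proof -
  define r where "r = card J"
  obtain g where g: "bij_betw g {1..r} J"
    using ex_bij_betw_nat_finite_1[OF assms(2)] unfolding r_def by blast
  have gJ: "g i \<in> J" if "i \<in> {1..r}" for i
    using g that bij_betwE by blast
  define c' where "c' i = (if i = 0 then c0 else c (g i))" for i
  have "Sq (p ^ e) r c' = Sq_on (p ^ e) {1..r} c0 (c \<circ> g)"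
    unfolding Sq_eq_Sq_on by (simp add: c'_def cong: Sq_on_cong) (simp add: c'_def)
  also have "\<dots> = Sq_on (p ^ e) J c0 c"
    by (rule Sq_on_reindex[OF g, symmetric])
  finally have S: "Sq (p ^ e) r c' = Sq_on (p ^ e) J c0 c" .
  have "(\<Sum>i=0..r. c' i) = c0 + (\<Sum>i=1..r. c (g i))"
    by (simp add: sum.atLeast_Suc_atMost c'_def)
  also have "(\<Sum>i=1..r. c (g i)) = sum c J"
    by (rule sum.reindex_bij_betw[OF g])
  finally have sum_c': "(\<Sum>i=0..r. c' i) \<in> \<int>"
    using assms(3) by (simp add: admissible_def)
  have "\<forall>i\<in>{0..r}. (of_nat (p ^ e) - 1) * c' i \<in> \<int>"
    using assms(3) admissible_const_Ints[OF assms(3,2)] gJ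
    by (auto simp: c'_def admissible_def)
  moreover have "r \<ge> 1"
    using assms(2,5) unfolding r_def by (metis One_nat_def Suc_leI card_gt_0_iff empty_iff)
  moreover have "\<forall>i\<in>{1..r}. c' i \<noteq> 0"
    using assms(4) gJ by (simp add: c'_def)
  moreover have "\<exists>i\<in>{1..r}. c' i > 0"
    using assms(5) bij_betw_imp_surj_on[OF g] by (force simp: c'_def)
  ultimately show ?thesis
    unfolding elem_p_nested_def r_def[symmetric] S[symmetric]
    using assms(1) sum_c' by blast
qed

lemma p_nested_Sq_on:
  assumes "e \<ge> 1" "finite J" "admissible (p ^ e) J c0 c" "card {j\<in>J. c j \<noteq> 0} \<le> k"
  shows "p_nested p k (Sq_on (p ^ e) J c0 c)"
proof -
  let ?J = "{j\<in>J. c j \<noteq> 0}"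
  have S: "Sq_on (p ^ e) J c0 c = Sq_on (p ^ e) ?J c0 c"
    by (rule Sq_on_nonzero_coeffs[OF assms(2)])
  show ?thesis
  proof (cases "\<exists>j\<in>?J. c j > 0")
    case True
    have "elem_p_nested p (card ?J) (Sq_on (p ^ e) ?J c0 c)"
      using True assms(2) admissible_nonzero_coeffs[OF assms(3,2)]
      by (intro elem_p_nested_Sq_onI[OF assms(1)]) auto
    then show ?thesis
      unfolding S using assms(4) by (rule p_nested_elem)
  next
    case False
    then have "finite (Sq_on (p ^ e) ?J c0 c)"
      by (intro Sq_on_nonpos_coeffs_finite) auto
    then show ?thesis
      unfolding S by (rule p_nested_finite)
  qed
qed

lemma sum_split_filter:
  assumes "finite A"
  shows "sum f A = sum f {x\<in>A. P x} + sum f {x\<in>A. \<not> P x}"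
  using sum.Int_Diff[OF assms, of f "Collect P"] by (simp add: Collect_conj_eq Diff_eq Compl_eq)

lemma sum_powers_split:
  fixes c :: "'j \<Rightarrow> 'a::comm_semiring_1"
  assumes "finite J"
    and "\<And>j. j \<in> J \<Longrightarrow> ch j < T0 \<Longrightarrow> k j = ch j"
    and "\<And>j. j \<in> J \<Longrightarrow> T0 \<le> ch j \<Longrightarrow> k j = ch j + P * u j"
  shows "(\<Sum>j\<in>J. c j * of_nat q ^ k j) =
    (\<Sum>j\<in>{j\<in>J. ch j < T0}. c j * of_nat q ^ ch j) +
    (\<Sum>j\<in>{j\<in>J. T0 \<le> ch j}. (c j * of_nat q ^ ch j) * of_nat (q ^ P) ^ u j)"
proof -
  have "(\<Sum>j\<in>J. c j * of_nat q ^ k j) =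
      (\<Sum>j\<in>{j\<in>J. ch j < T0}. c j * of_nat q ^ k j) + (\<Sum>j\<in>{j\<in>J. \<not> ch j < T0}. c j * of_nat q ^ k j)"
    by (rule sum_split_filter[OF assms(1)])
  also have "(\<Sum>j\<in>{j\<in>J. ch j < T0}. c j * of_nat q ^ k j) = (\<Sum>j\<in>{j\<in>J. ch j < T0}. c j * of_nat q ^ ch j)"
    by (rule sum.cong) (auto simp: assms(2))
  also have "(\<Sum>j\<in>{j\<in>J. \<not> ch j < T0}. c j * of_nat q ^ k j) =
      (\<Sum>j\<in>{j\<in>J. T0 \<le> ch j}. (c j * of_nat q ^ ch j) * of_nat (q ^ P) ^ u j)"
    by (rule sum.cong) (auto simp: assms(3) power_add power_mult mult.assoc not_less)
  finally show ?thesis .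
qed

text \<open>Reducing every exponent \<open>k\<close> with \<open>k \<ge> T0\<close> modulo \<open>P\<close> into \<open>[T0, T0 + P)\<close> writes
  \<open>S\<^sub>q\<close> as a finite union of sets \<open>S\<^bsub>q\<^sup>P\<^esub>\<close>: the residues \<open>ch j\<close> below \<open>T0\<close> are absorbed
  into the constant, the others into the coefficients.\<close>
lemma Sq_on_split_exponents:
  assumes "P \<ge> 1" "finite J"
  shows "Sq_on q J c0 c = (\<Union>ch \<in> J \<rightarrow>\<^sub>E {..<T0 + P}.
     Sq_on (q ^ P) {j\<in>J. T0 \<le> ch j} (c0 + (\<Sum>j\<in>{j\<in>J. ch j < T0}. c j * of_nat q ^ ch j))
       (\<lambda>j. c j * of_nat q ^ ch j))"
    (is "_ = (\<Union>ch \<in> _. ?piece ch)")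
proof (intro set_eqI iffI)
  fix n assume "n \<in> Sq_on q J c0 c"
  then obtain k where k: "of_nat n = c0 + (\<Sum>j\<in>J. c j * of_nat q ^ k j)"
    by (auto simp: Sq_on_def)
  define ch where "ch = restrict (\<lambda>j. if k j < T0 then k j else T0 + (k j - T0) mod P) J"
  define u where "u j = (k j - T0) div P" for j
  have ch: "ch \<in> J \<rightarrow>\<^sub>E {..<T0 + P}"
    using assms(1) by (auto simp: ch_def)
  have "(\<Sum>j\<in>J. c j * of_nat q ^ k j) = (\<Sum>j\<in>{j\<in>J. ch j < T0}. c j * of_nat q ^ ch j) +
      (\<Sum>j\<in>{j\<in>J. T0 \<le> ch j}. (c j * of_nat q ^ ch j) * of_nat (q ^ P) ^ u j)"
    by (rule sum_powers_split[OF assms(2)]) (auto simp: ch_def u_def split: if_splits)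
  then have "n \<in> ?piece ch"
    using k unfolding Sq_on_def by (intro CollectI exI[of _ u]) (simp add: add.assoc)
  with ch show "n \<in> (\<Union>ch \<in> J \<rightarrow>\<^sub>E {..<T0 + P}. ?piece ch)"
    by blast
next
  fix n assume "n \<in> (\<Union>ch \<in> J \<rightarrow>\<^sub>E {..<T0 + P}. ?piece ch)"
  then obtain ch u where n: "of_nat n = (c0 + (\<Sum>j\<in>{j\<in>J. ch j < T0}. c j * of_nat q ^ ch j)) +
      (\<Sum>j\<in>{j\<in>J. T0 \<le> ch j}. (c j * of_nat q ^ ch j) * of_nat (q ^ P) ^ u j)"
    unfolding Sq_on_def UN_iff mem_Collect_eq by blast
  define k where "k j = (if ch j < T0 then ch j else ch j + P * u j)" for j
  have "(\<Sum>j\<in>J. c j * of_nat q ^ k j) = (\<Sum>j\<in>{j\<in>J. ch j < T0}. c j * of_nat q ^ ch j) +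
      (\<Sum>j\<in>{j\<in>J. T0 \<le> ch j}. (c j * of_nat q ^ ch j) * of_nat (q ^ P) ^ u j)"
    by (rule sum_powers_split[OF assms(2)]) (auto simp: k_def)
  then show "n \<in> Sq_on q J c0 c"
    using n unfolding Sq_on_def by (intro CollectI exI[of _ k]) (simp add: add.assoc)
qed

lemma admissible_split_exponents:
  assumes "admissible q J c0 c" "finite J"
  shows "admissible (q ^ P) {j\<in>J. T0 \<le> ch j} (c0 + (\<Sum>j\<in>{j\<in>J. ch j < T0}. c j * of_nat q ^ ch j))
    (\<lambda>j. c j * of_nat q ^ ch j)"
  unfolding admissible_def
proof
  show "\<forall>j\<in>{j\<in>J. T0 \<le> ch j}. (of_nat (q ^ P) - 1) * (c j * of_nat q ^ ch j) \<in> \<int>"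
  proof
    fix j assume "j \<in> {j\<in>J. T0 \<le> ch j}"
    then have cj: "(of_nat q - 1) * c j \<in> \<int>"
      using assms(1) by (auto simp: admissible_def)
    have "(of_nat (q ^ P) - 1) * (c j * of_nat q ^ ch j) =
        ((of_nat q - 1) * c j) * (of_nat q ^ ch j * (\<Sum>i<P. (of_nat q :: rat) ^ i))"
      by (simp only: of_nat_power power_diff_1_eq) (simp add: algebra_simps)
    also have "\<dots> \<in> \<int>"
      by (rule Ints_mult[OF cj]) (intro Ints_mult Ints_sum Ints_power, auto)
    finally show "(of_nat (q ^ P) - 1) * (c j * of_nat q ^ ch j) \<in> \<int>" .
  qed
  have "c0 + (\<Sum>j\<in>J. c j * of_nat q ^ ch j) = c0 + (\<Sum>j\<in>{j\<in>J. ch j < T0}. c j * of_nat q ^ ch j) +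
      (\<Sum>j\<in>{j\<in>J. T0 \<le> ch j}. c j * of_nat q ^ ch j)"
    by (subst sum_powers_split[OF assms(2), where u = "\<lambda>_. 0"]) simp_all
  moreover have "c0 + (\<Sum>j\<in>J. c j * of_nat q ^ ch j) \<in> \<int>"
    by (rule admissible_value_Ints[OF assms(1)])
  ultimately show "c0 + (\<Sum>j\<in>{j\<in>J. ch j < T0}. c j * of_nat q ^ ch j) +
      (\<Sum>j\<in>{j\<in>J. T0 \<le> ch j}. c j * of_nat q ^ ch j) \<in> \<int>"
    by (simp add: add.assoc)
qed

lemma Sq_on_base_power:
  assumes "P \<ge> 1" "finite J"
  shows "Sq_on q J c0 c = (\<Union>ch \<in> J \<rightarrow>\<^sub>E {..<P}. Sq_on (q ^ P) J c0 (\<lambda>j. c j * of_nat q ^ ch j))"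
  using Sq_on_split_exponents[OF assms, of q c0 c 0] by simp

lemma admissible_base_power:
  assumes "admissible q J c0 c" "finite J"
  shows "admissible (q ^ P) J c0 (\<lambda>j. c j * of_nat q ^ ch j)"
  using admissible_split_exponents[OF assms, of P 0 ch] by simp

section \<open>Patterns of solutions of exponential equations\<close>

text \<open>A solution \<open>x\<close> of \<open>e0 + (\<Sum>i\<in>I. e i * q ^ x i) = 0\<close> follows the pattern \<open>(pp, w)\<close> if every
  exponent is either fixed, \<open>x i = w i\<close> (\<open>pp i = None\<close>), or a shift \<open>x i = t C + w i\<close> of a free
  exponent \<open>t C\<close> shared by the cluster \<open>C\<close> (\<open>pp i = Some C\<close>).  The pattern is balanced if the fixed
  terms cancel \<open>e0\<close> and every cluster sums to zero; then every choice of \<open>t\<close> yields a solution.\<close>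

definition pattern_exp :: "('i \<Rightarrow> 'c option) \<Rightarrow> ('i \<Rightarrow> nat) \<Rightarrow> ('c \<Rightarrow> nat) \<Rightarrow> 'i \<Rightarrow> nat" where
  "pattern_exp pp w t i = (case pp i of None \<Rightarrow> w i | Some C \<Rightarrow> t C + w i)"

definition cluster_sum ::
    "nat \<Rightarrow> 'i set \<Rightarrow> ('i \<Rightarrow> 'a::comm_semiring_1) \<Rightarrow> ('i \<Rightarrow> 'c option) \<Rightarrow> ('i \<Rightarrow> nat) \<Rightarrow> 'c option \<Rightarrow> 'a" where
  "cluster_sum q I e pp w C = (\<Sum>i\<in>{i\<in>I. pp i = C}. e i * of_nat q ^ w i)"

definition balanced_pattern ::
    "nat \<Rightarrow> 'i set \<Rightarrow> ('i \<Rightarrow> 'a::comm_ring_1) \<Rightarrow> 'a \<Rightarrow> ('i \<Rightarrow> 'c option) \<Rightarrow> ('i \<Rightarrow> nat) \<Rightarrow> bool" where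
  "balanced_pattern q I e e0 pp w \<longleftrightarrow>
     e0 + cluster_sum q I e pp w None = 0 \<and> (\<forall>C. cluster_sum q I e pp w (Some C) = 0)"

definition pattern_on :: "'i set \<Rightarrow> nat \<Rightarrow> ('i \<Rightarrow> 'i option) \<Rightarrow> ('i \<Rightarrow> nat) \<Rightarrow> bool" where
  "pattern_on I B pp w \<longleftrightarrow> (\<forall>i\<in>I. pp i \<in> insert None (Some ` I) \<and> w i \<le> B)"

definition patterned :: "nat \<Rightarrow> 'i set \<Rightarrow> ('i \<Rightarrow> 'a::comm_ring_1) \<Rightarrow> 'a \<Rightarrow> nat \<Rightarrow> ('i \<Rightarrow> nat) \<Rightarrow> bool" where
  "patterned q I e e0 B x \<longleftrightarrow> (\<exists>pp w t. pattern_on I B pp w \<and> balanced_pattern q I e e0 pp w \<and>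
     (\<forall>i\<in>I. x i = pattern_exp pp w t i))"

definition pattern_bound :: "nat \<Rightarrow> 'i set \<Rightarrow> ('i \<Rightarrow> 'a::comm_ring_1) \<Rightarrow> 'a \<Rightarrow> nat \<Rightarrow> bool" where
  "pattern_bound q I e e0 B \<longleftrightarrow>
     (\<forall>x. e0 + (\<Sum>i\<in>I. e i * of_nat q ^ x i) = 0 \<longrightarrow> patterned q I e e0 B x)"

lemma sum_pattern_exp:
  fixes e :: "'i \<Rightarrow> 'a::comm_semiring_1"
  assumes "finite J" "finite L" "\<forall>j\<in>J. pp j \<in> insert None (Some ` L)"
  shows "(\<Sum>j\<in>J. e j * of_nat q ^ pattern_exp pp w t j) =
    cluster_sum q J e pp w None + (\<Sum>C\<in>L. cluster_sum q J e pp w (Some C) * of_nat q ^ t C)"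
proof -
  let ?h = "\<lambda>j. e j * of_nat q ^ pattern_exp pp w t j"
  have "sum ?h J = (\<Sum>y\<in>insert None (Some ` L). sum ?h {j\<in>J. pp j = y})"
    by (rule sum.group[symmetric]) (use assms in auto)
  also have "\<dots> = sum ?h {j\<in>J. pp j = None} + (\<Sum>C\<in>L. sum ?h {j\<in>J. pp j = Some C})"
    using assms(2) by (simp add: sum.reindex)
  also have "sum ?h {j\<in>J. pp j = None} = cluster_sum q J e pp w None"
    unfolding cluster_sum_def by (rule sum.cong) (auto simp: pattern_exp_def)
  also have "(\<Sum>C\<in>L. sum ?h {j\<in>J. pp j = Some C}) =
      (\<Sum>C\<in>L. cluster_sum q J e pp w (Some C) * of_nat q ^ t C)"
    unfolding cluster_sum_def sum_distrib_right
    by (intro sum.cong refl) (auto simp: pattern_exp_def power_add mult_ac)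
  finally show ?thesis .
qed

lemma balanced_pattern_solution:
  assumes "finite I" "finite L" "\<forall>i\<in>I. pp i \<in> insert None (Some ` L)"
    and "balanced_pattern q I e e0 pp w"
  shows "e0 + (\<Sum>i\<in>I. e i * of_nat q ^ pattern_exp pp w t i) = 0"
  using assms(4) by (simp add: sum_pattern_exp[OF assms(1-3)] balanced_pattern_def flip: add.assoc)

lemma pattern_bound_mono:
  assumes "pattern_bound q I e e0 B" "B \<le> B'"
  shows "pattern_bound q I e e0 B'"
proof -
  have "pattern_on I B' pp w" if "pattern_on I B pp w" for pp w
    using that assms(2) by (auto simp: pattern_on_def)
  with assms(1) show ?thesis
    unfolding pattern_bound_def patterned_def by metis
qed

lemma balanced_pattern_insert_fixed:
  assumes "i0 \<in> I" "finite I" "balanced_pattern q (I - {i0}) e (e0 + e i0 * of_nat q ^ m) pp w"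
  shows "balanced_pattern q I e e0 (pp(i0 := None)) (w(i0 := m))"
proof -
  have sets: "{i\<in>I. (pp(i0 := None)) i = C} =
      (if C = None then insert i0 {i\<in>I - {i0}. pp i = C} else {i\<in>I - {i0}. pp i = C})" for C
    using assms(1) by auto
  have "cluster_sum q I e (pp(i0 := None)) (w(i0 := m)) C =
      (if C = None then e i0 * of_nat q ^ m else 0) + cluster_sum q (I - {i0}) e pp w C" for C
    unfolding cluster_sum_def sets using assms(2) by (auto intro!: sum.cong)
  with assms(3) show ?thesis
    by (simp add: balanced_pattern_def algebra_simps)
qed

lemma patterned_insert_fixed:
  fixes e :: "'i \<Rightarrow> 'a::comm_ring_1"
  assumes "finite I" "i0 \<in> I" "m \<le> B"
    and "pattern_bound q (I - {i0}) e (e0 + e i0 * of_nat q ^ m) B"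
    and "x i0 = m" "e0 + (\<Sum>i\<in>I. e i * of_nat q ^ x i) = 0"
  shows "patterned q I e e0 B x"
proof -
  have "(e0 + e i0 * of_nat q ^ m) + (\<Sum>i\<in>I - {i0}. e i * of_nat q ^ x i) = 0"
    using assms(5,6) by (simp add: sum.remove[OF assms(1,2)] add.assoc)
  then obtain pp w t where pw: "pattern_on (I - {i0}) B pp w"
      "balanced_pattern q (I - {i0}) e (e0 + e i0 * of_nat q ^ m) pp w"
      "\<forall>i\<in>I - {i0}. x i = pattern_exp pp w t i"
    using assms(4) unfolding pattern_bound_def patterned_def by blast
  have "pattern_on I B (pp(i0 := None)) (w(i0 := m))"
    using pw(1) assms(3) by (auto simp: pattern_on_def)
  moreover have "\<forall>i\<in>I. x i = pattern_exp (pp(i0 := None)) (w(i0 := m)) t i"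
    using pw(3) assms(5) by (auto simp: pattern_exp_def split: option.split)
  ultimately show ?thesis
    unfolding patterned_def using balanced_pattern_insert_fixed[OF assms(2,1) pw(2)] by blast
qed

text \<open>For \<open>e0 = 0\<close> the fixed terms can form one more cluster \<open>C0\<close>, with free exponent \<open>m\<close>.\<close>
lemma patterned_shift:
  assumes "pattern_on I B pp w" "balanced_pattern q I e 0 pp w" "C0 \<in> I" "\<forall>i\<in>I. pp i \<noteq> Some C0"
    and "\<forall>i\<in>I. x i = m + pattern_exp pp w t i"
  shows "patterned q I e 0 B x"
proof -
  define pp' where "pp' i = Some (case pp i of None \<Rightarrow> C0 | Some C \<Rightarrow> C)" for i
  define t' where "t' C = (if C = C0 then m else t C + m)" for C
  have pp': "pp' i = Some C \<longleftrightarrow> pp i = (if C = C0 then None else Some C)" if "i \<in> I" for i C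
    using assms(4) that by (cases "pp i") (auto simp: pp'_def)
  have none: "{i\<in>I. pp' i = None} = {}"
    by (auto simp: pp'_def)
  have some: "{i\<in>I. pp' i = Some C} = {i\<in>I. pp i = (if C = C0 then None else Some C)}" for C
    using pp' by auto
  have "balanced_pattern q I e 0 pp' w"
    using assms(2) unfolding balanced_pattern_def cluster_sum_def none some by auto
  moreover have "pattern_on I B pp' w"
    using assms(1,3) by (auto simp: pattern_on_def pp'_def split: option.split)
  moreover have "\<forall>i\<in>I. x i = pattern_exp pp' w t' i"
    using assms(4,5) by (auto simp: pattern_exp_def pp'_def t'_def split: option.split)
  ultimately show ?thesis
    unfolding patterned_def by blast
qed

lemma patterned_insert_cluster:
  fixes al :: "'i \<Rightarrow> int"
  assumes "finite I" "i0 \<in> I" "q \<ge> 1"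
    and "pattern_bound q (I - {i0}) al (al i0) B"
    and "x i0 = m" "\<forall>i\<in>I. m \<le> x i" "(\<Sum>i\<in>I. al i * int q ^ x i) = 0"
  shows "patterned q I al 0 B x"
proof -
  define y where "y i = x i - m" for i
  have "int q ^ m * (\<Sum>i\<in>I. al i * int q ^ y i) = (\<Sum>i\<in>I. al i * int q ^ x i)"
    unfolding sum_distrib_left using assms(6)
    by (intro sum.cong) (auto simp: y_def mult_ac simp flip: power_add)
  then have "al i0 + (\<Sum>i\<in>I - {i0}. al i * int q ^ y i) = 0"
    using assms(3,5,7) by (simp add: sum.remove[OF assms(1,2)] y_def)
  then obtain pp w t where pw: "pattern_on (I - {i0}) B pp w"
      "balanced_pattern q (I - {i0}) al (al i0) pp w" "\<forall>i\<in>I - {i0}. y i = pattern_exp pp w t i"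
    using assms(4) unfolding pattern_bound_def patterned_def by blast
  have labels: "pp i \<in> insert None (Some ` (I - {i0}))" "w i \<le> B" if "i \<in> I" "i \<noteq> i0" for i
    using pw(1) that by (simp_all add: pattern_on_def)
  show ?thesis
  proof (rule patterned_shift[OF _ _ assms(2)])
    show "pattern_on I B (pp(i0 := None)) (w(i0 := 0))"
      using labels by (auto simp: pattern_on_def)
    show "balanced_pattern q I al 0 (pp(i0 := None)) (w(i0 := 0))"
      using balanced_pattern_insert_fixed[of i0 I q al 0 0 pp w] assms(1,2) pw(2) by simp
    show "\<forall>i\<in>I. (pp(i0 := None)) i \<noteq> Some i0"
    proof
      fix i assume "i \<in> I"
      then show "(pp(i0 := None)) i \<noteq> Some i0"
        using labels(1)[of i] by (cases "i = i0") auto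
    qed
    show "\<forall>i\<in>I. x i = m + pattern_exp (pp(i0 := None)) (w(i0 := 0)) t i"
    proof
      fix i assume i: "i \<in> I"
      show "x i = m + pattern_exp (pp(i0 := None)) (w(i0 := 0)) t i"
      proof (cases "i = i0")
        case False
        then have "pattern_exp (pp(i0 := None)) (w(i0 := 0)) t i = y i"
          using pw(3) i by (simp add: pattern_exp_def split: option.split)
        then show ?thesis
          using assms(6) i by (simp add: y_def)
      qed (simp add: assms(5) pattern_exp_def)
    qed
  qed
qed

lemma min_exponent_lt:
  fixes al :: "'i \<Rightarrow> int"
  assumes "q \<ge> 2" "a0 \<noteq> 0" "a0 + (\<Sum>i\<in>I. al i * int q ^ x i) = 0" "\<forall>i\<in>I. m \<le> x i"
  shows "m < nat \<bar>a0\<bar>"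
proof -
  have "int q ^ m dvd (\<Sum>i\<in>I. al i * int q ^ x i)"
    using assms(4) by (intro dvd_sum dvd_mult le_imp_power_dvd) auto
  then have "int q ^ m dvd a0"
    using assms(3) by (metis add.commute dvd_minus_iff eq_neg_iff_add_eq_0)
  then have "\<bar>int q ^ m\<bar> \<le> \<bar>a0\<bar>"
    using dvd_imp_le_int[OF assms(2)] by blast
  then have "int q ^ m \<le> \<bar>a0\<bar>"
    by simp
  moreover have "int m < 2 ^ m"
    by (metis less_exp of_nat_less_iff of_nat_numeral of_nat_power)
  moreover have "(2::int) ^ m \<le> int q ^ m"
    using assms(1) by (intro power_mono) auto
  ultimately show ?thesis
    by linarith
qed

text \<open>If \<open>a0 \<noteq> 0\<close>, then \<open>q ^ m\<close> divides \<open>a0\<close> for the minimal exponent \<open>m\<close>, so \<open>m\<close> is bounded and the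
  term of minimal exponent is absorbed into the constant.  If \<open>a0 = 0\<close>, dividing by \<open>q ^ m\<close> makes
  that term the constant, and \<open>m\<close> becomes the free exponent of a new cluster.\<close>
lemma patterned_min_exponent:
  fixes al :: "'i \<Rightarrow> int"
  assumes "finite I" "q \<ge> 2" "i0 \<in> I" "\<forall>i\<in>I. x i0 \<le> x i" "a0 + (\<Sum>i\<in>I. al i * int q ^ x i) = 0"
    and "nat \<bar>a0\<bar> \<le> B" "pattern_bound q (I - {i0}) al (al i0) B"
    and "\<And>v. v < nat \<bar>a0\<bar> \<Longrightarrow> pattern_bound q (I - {i0}) al (a0 + al i0 * int q ^ v) B"
  shows "patterned q I al a0 B x"
proof (cases "a0 = 0")
  case True
  then show ?thesis
    using patterned_insert_cluster[OF assms(1,3) _ assms(7) refl assms(4)] assms(2,5) by simp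
next
  case False
  have "x i0 < nat \<bar>a0\<bar>"
    by (rule min_exponent_lt[OF assms(2) False assms(5,4)])
  then show ?thesis
    using patterned_insert_fixed[OF assms(1,3) _ assms(8) refl assms(5)] assms(6) by simp
qed

lemma finite_common_bound:
  fixes P :: "'a \<Rightarrow> nat \<Rightarrow> bool"
  assumes "finite F" "\<And>x. x \<in> F \<Longrightarrow> \<exists>B. P x B" "\<And>x B B'. P x B \<Longrightarrow> B \<le> B' \<Longrightarrow> P x B'"
  shows "\<exists>B. \<forall>x\<in>F. P x B"
  using assms(1,2)
proof (induction F rule: finite_induct)
  case (insert x F)
  then obtain B1 B2 where "P x B1" "\<forall>y\<in>F. P y B2"
    by blast
  then show ?case
    using assms(3) by (metis insert_iff max.cobounded1 max.cobounded2)
qed simp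

lemma pattern_bound_exists:
  fixes al :: "'i \<Rightarrow> int"
  assumes "finite I" "q \<ge> 2"
  shows "\<exists>B. pattern_bound q I al a0 B"
  using assms(1)
proof (induction "card I" arbitrary: I a0 rule: less_induct)
  case less
  define A where "A i = (\<lambda>v. a0 + al i * int q ^ v) ` {..<nat \<bar>a0\<bar>} \<union> {al i}" for i
  have "\<exists>B. \<forall>ia\<in>Sigma I A. pattern_bound q (I - {fst ia}) al (snd ia) B"
  proof (rule finite_common_bound)
    show "finite (Sigma I A)"
      using less.prems by (simp add: A_def)
    show "\<exists>B. pattern_bound q (I - {fst ia}) al (snd ia) B" if "ia \<in> Sigma I A" for ia
      using that less.hyps[of "I - {fst ia}" "snd ia"] card_Diff1_less[OF less.prems, of "fst ia"] less.prems
      by auto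
  qed (rule pattern_bound_mono)
  then obtain B0 where "\<forall>ia\<in>Sigma I A. pattern_bound q (I - {fst ia}) al (snd ia) B0"
    by blast
  then have bound: "pattern_bound q (I - {i}) al a (max (nat \<bar>a0\<bar>) B0)" if "i \<in> I" "a \<in> A i" for i a
    using that pattern_bound_mono[of q "I - {i}" al a B0] by force
  have "patterned q I al a0 (max (nat \<bar>a0\<bar>) B0) x" if x: "a0 + (\<Sum>i\<in>I. al i * int q ^ x i) = 0" for x
  proof (cases "I = {}")
    case True
    then show ?thesis
      using x by (simp add: patterned_def pattern_on_def balanced_pattern_def cluster_sum_def)
  next
    case False
    then have "Min (x ` I) \<in> x ` I"
      using less.prems by (intro Min_in) auto
    then obtain i0 where i0: "i0 \<in> I" "x i0 = Min (x ` I)"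
      by auto
    have "\<forall>i\<in>I. x i0 \<le> x i"
      using less.prems by (auto simp: i0(2) intro: Min_le)
    then show ?thesis
      using less.prems i0(1) by (intro patterned_min_exponent[OF _ assms(2) _ _ x] bound)
        (auto simp: A_def)
  qed
  then show ?case
    unfolding pattern_bound_def by blast
qed

lemma of_int_cluster_sum:
  assumes "\<forall>i\<in>I. of_int (al i) = c * e i"
  shows "of_int (cluster_sum q I al pp w C) = c * cluster_sum q I e pp w C"
  unfolding cluster_sum_def of_int_sum sum_distrib_left
  using assms by (intro sum.cong) (auto simp: mult.assoc)

lemma pattern_bound_scale:
  fixes e :: "'i \<Rightarrow> 'a::field_char_0"
  assumes "pattern_bound q I al a0 B" "c \<noteq> 0" "\<forall>i\<in>I. of_int (al i) = c * e i" "of_int a0 = c * e0"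
  shows "pattern_bound q I e e0 B"
  unfolding pattern_bound_def
proof (intro allI impI)
  fix x assume x: "e0 + (\<Sum>i\<in>I. e i * of_nat q ^ x i) = 0"
  have "of_int (a0 + (\<Sum>i\<in>I. al i * int q ^ x i)) = c * (e0 + (\<Sum>i\<in>I. e i * of_nat q ^ x i))"
    unfolding of_int_add of_int_sum assms(4) distrib_left sum_distrib_left
    using assms(3) by (simp add: mult.assoc)
  then have "a0 + (\<Sum>i\<in>I. al i * int q ^ x i) = 0"
    using x by (simp only: mult_zero_right of_int_eq_0_iff)
  then obtain pp w t where pw: "pattern_on I B pp w" "balanced_pattern q I al a0 pp w"
      "\<forall>i\<in>I. x i = pattern_exp pp w t i"
    using assms(1) unfolding pattern_bound_def patterned_def by blast
  have "of_int (a0 + cluster_sum q I al pp w None) = c * (e0 + cluster_sum q I e pp w None)"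
    by (simp only: of_int_add assms(4) of_int_cluster_sum[OF assms(3)] distrib_left)
  moreover have "of_int (cluster_sum q I al pp w (Some C)) = c * cluster_sum q I e pp w (Some C)" for C
    by (rule of_int_cluster_sum[OF assms(3)])
  ultimately have "balanced_pattern q I e e0 pp w"
    using pw(2) assms(2) unfolding balanced_pattern_def by (metis mult_eq_0_iff of_int_0)
  with pw show "patterned q I e e0 B x"
    unfolding patterned_def by blast
qed

lemma pattern_bound_exists_Ints:
  fixes e :: "'i \<Rightarrow> rat"
  assumes "finite I" "q \<ge> 2" "\<forall>i\<in>I. (of_nat q - 1) * e i \<in> \<int>" "(of_nat q - 1) * e0 \<in> \<int>"
  shows "\<exists>B. pattern_bound q I e e0 B"
proof -
  have floor_Ints: "of_int \<lfloor>r\<rfloor> = r" if "r \<in> \<int>" for r :: rat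
    using that by (metis Ints_cases floor_of_int)
  obtain B where "pattern_bound q I (\<lambda>i. \<lfloor>(of_nat q - 1) * e i\<rfloor>) \<lfloor>(of_nat q - 1) * e0\<rfloor> B"
    using pattern_bound_exists[OF assms(1,2)] by blast
  then have "pattern_bound q I e e0 B"
    by (rule pattern_bound_scale[where c = "of_nat q - 1"]) (use assms in \<open>simp_all add: floor_Ints\<close>)
  then show ?thesis ..
qed

section \<open>Intersections of \<open>p\<close>-nested sets\<close>

definition balanced_patterns ::
    "nat \<Rightarrow> 'i set \<Rightarrow> ('i \<Rightarrow> 'a::comm_ring_1) \<Rightarrow> 'a \<Rightarrow> nat \<Rightarrow> (('i \<Rightarrow> 'i option) \<times> ('i \<Rightarrow> nat)) set" where
  "balanced_patterns q I e e0 B = {(pp, w) \<in> (I \<rightarrow>\<^sub>E insert None (Some ` I)) \<times> (I \<rightarrow>\<^sub>E {..B}).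
     balanced_pattern q I e e0 pp w}"

lemma finite_balanced_patterns: "finite I \<Longrightarrow> finite (balanced_patterns q I e e0 B)"
  unfolding balanced_patterns_def
  by (rule finite_subset[of _ "(I \<rightarrow>\<^sub>E insert None (Some ` I)) \<times> (I \<rightarrow>\<^sub>E {..B})"])
    (auto intro!: finite_PiE)

lemma cluster_sum_cong:
  assumes "\<forall>i\<in>I. pp i = pp' i \<and> w i = w' i"
  shows "cluster_sum q I e pp w C = cluster_sum q I e pp' w' C"
proof -
  have "{i\<in>I. pp i = C} = {i\<in>I. pp' i = C}"
    using assms by auto
  then show ?thesis
    unfolding cluster_sum_def using assms by (intro sum.cong) auto
qed

lemma patterned_balanced_patterns:
  assumes "patterned q I e e0 B x"
  obtains pp w t where "(pp, w) \<in> balanced_patterns q I e e0 B" "\<forall>i\<in>I. x i = pattern_exp pp w t i"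
proof -
  obtain pp w t where pw: "pattern_on I B pp w" "balanced_pattern q I e e0 pp w"
      "\<forall>i\<in>I. x i = pattern_exp pp w t i"
    using assms unfolding patterned_def by blast
  have "(restrict pp I, restrict w I) \<in> balanced_patterns q I e e0 B"
    using pw(1,2) cluster_sum_cong[of I "restrict pp I" pp "restrict w I" w q e]
    by (auto simp: balanced_patterns_def pattern_on_def balanced_pattern_def)
  moreover have "\<forall>i\<in>I. x i = pattern_exp (restrict pp I) (restrict w I) t i"
    using pw(3) by (simp add: pattern_exp_def split: option.split)
  ultimately show thesis
    by (rule that)
qed

lemma admissible_cluster_sums:
  assumes "admissible q J a0 a" "finite J" "finite L" "\<forall>j\<in>J. pp j \<in> insert None (Some ` L)"
  shows "admissible q L (a0 + cluster_sum q J a pp w None) (\<lambda>C. cluster_sum q J a pp w (Some C))"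
  unfolding admissible_def
proof
  show "\<forall>C\<in>L. (of_nat q - 1) * cluster_sum q J a pp w (Some C) \<in> \<int>"
  proof
    fix C
    have "(of_nat q - 1) * cluster_sum q J a pp w (Some C) =
        (\<Sum>j\<in>{j\<in>J. pp j = Some C}. ((of_nat q - 1) * a j) * of_nat q ^ w j)"
      unfolding cluster_sum_def sum_distrib_left by (simp add: mult.assoc)
    also have "\<dots> \<in> \<int>"
      using assms(1) unfolding admissible_def by (auto intro!: Ints_sum Ints_mult[OF _ Ints_power])
    finally show "(of_nat q - 1) * cluster_sum q J a pp w (Some C) \<in> \<int>" .
  qed
  have "a0 + cluster_sum q J a pp w None + (\<Sum>C\<in>L. cluster_sum q J a pp w (Some C)) =
      a0 + (\<Sum>j\<in>J. a j * of_nat q ^ pattern_exp pp w (\<lambda>_. 0) j)"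
    by (simp add: sum_pattern_exp[OF assms(2-4)] add.assoc)
  also have "\<dots> \<in> \<int>"
    by (rule admissible_value_Ints[OF assms(1)])
  finally show "a0 + cluster_sum q J a pp w None + (\<Sum>C\<in>L. cluster_sum q J a pp w (Some C)) \<in> \<int>" .
qed

lemma card_nonzero_cluster_sums:
  assumes "finite J"
  shows "card {C\<in>L. cluster_sum q J a pp w (Some C) \<noteq> 0} \<le> card J"
proof -
  have "{C\<in>L. cluster_sum q J a pp w (Some C) \<noteq> 0} \<subseteq> (\<lambda>j. the (pp j)) ` J"
  proof
    fix C assume "C \<in> {C\<in>L. cluster_sum q J a pp w (Some C) \<noteq> 0}"
    then have "cluster_sum q J a pp w (Some C) \<noteq> 0"
      by simp
    then have "{j\<in>J. pp j = Some C} \<noteq> {}"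
      unfolding cluster_sum_def by (metis sum.empty)
    then show "C \<in> (\<lambda>j. the (pp j)) ` J"
      by force
  qed
  then show ?thesis
    using assms by (meson card_image_le card_mono finite_imageI order_trans)
qed

lemma Sq_on_cluster_sums:
  assumes "finite J" "finite L" "\<forall>j\<in>J. pp j \<in> insert None (Some ` L)"
  shows "Sq_on q L (a0 + cluster_sum q J a pp w None) (\<lambda>C. cluster_sum q J a pp w (Some C)) =
    {n. \<exists>t. of_nat n = a0 + (\<Sum>j\<in>J. a j * of_nat q ^ pattern_exp pp w t j)}"
  unfolding Sq_on_def by (simp add: sum_pattern_exp[OF assms] add.assoc)

lemma sum_Plus_diff:
  fixes a :: "'a \<Rightarrow> 'r::comm_ring_1" and b :: "'b \<Rightarrow> 'r"
  assumes "finite J1" "finite J2"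
  shows "(a0 + (\<Sum>j\<in>J1. a j * of_nat q ^ x (Inl j))) - (b0 + (\<Sum>j\<in>J2. b j * of_nat q ^ x (Inr j))) =
    (a0 - b0) + (\<Sum>i\<in>J1 <+> J2. case_sum a (\<lambda>j. - b j) i * of_nat q ^ x i)"
  unfolding sum.Plus[OF assms] by (simp add: sum_negf)

text \<open>Equating the two representations of an element of the intersection gives the equation
  \<open>(a0 - b0) + \<Sum>a j q ^ k1 j - \<Sum>b j q ^ k2 j = 0\<close>; each of its finitely many bounded patterns turns
  the first representation into a set \<open>S\<^sub>q\<close> whose coefficients are the cluster sums.\<close>
lemma Sq_on_Int_eq_Union_patterns:
  fixes J1 :: "'a set" and J2 :: "'b set" and a :: "'a \<Rightarrow> rat" and b :: "'b \<Rightarrow> rat"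
  defines "I \<equiv> J1 <+> J2" and "e \<equiv> case_sum a (\<lambda>j. - b j)"
  assumes "finite J1" "finite J2" "pattern_bound q I e (a0 - b0) B"
  shows "Sq_on q J1 a0 a \<inter> Sq_on q J2 b0 b = (\<Union>(pp, w) \<in> balanced_patterns q I e (a0 - b0) B.
      Sq_on q I (a0 + cluster_sum q J1 a (pp \<circ> Inl) (w \<circ> Inl) None)
        (\<lambda>C. cluster_sum q J1 a (pp \<circ> Inl) (w \<circ> Inl) (Some C)))"
    (is "_ = (\<Union>(pp, w) \<in> ?Pats. ?piece pp w)")
proof -
  have fin: "finite I"
    using assms(3,4) by (simp add: I_def)
  note diff = sum_Plus_diff[OF assms(3,4), of a0 a q _ b0 b, folded I_def e_def]
  have labels: "\<forall>i\<in>I. pp i \<in> insert None (Some ` I)" if "(pp, w) \<in> ?Pats" for pp w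
    using that by (auto simp: balanced_patterns_def)
  have piece: "?piece pp w = {n. \<exists>t. of_nat n = a0 + (\<Sum>j\<in>J1. a j * of_nat q ^ pattern_exp pp w t (Inl j))}"
    if "(pp, w) \<in> ?Pats" for pp w
  proof -
    have "\<forall>j\<in>J1. (pp \<circ> Inl) j \<in> insert None (Some ` I)"
      using labels[OF that] InlI[of _ J1 J2] unfolding I_def by auto
    from Sq_on_cluster_sums[OF assms(3) fin this, of q a0 a "w \<circ> Inl"] show ?thesis
      by (simp add: pattern_exp_def comp_def)
  qed
  show ?thesis
  proof (intro set_eqI iffI)
    fix n assume "n \<in> Sq_on q J1 a0 a \<inter> Sq_on q J2 b0 b"
    then obtain k1 k2 where k1: "of_nat n = a0 + (\<Sum>j\<in>J1. a j * of_nat q ^ k1 j)"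
      and k2: "of_nat n = b0 + (\<Sum>j\<in>J2. b j * of_nat q ^ k2 j)"
      by (auto simp: Sq_on_def)
    have "(a0 - b0) + (\<Sum>i\<in>I. e i * of_nat q ^ case_sum k1 k2 i) = 0"
      using diff[of "case_sum k1 k2"] k1 k2 by simp
    then have "patterned q I e (a0 - b0) B (case_sum k1 k2)"
      using assms(5) unfolding pattern_bound_def by blast
    then obtain pp w t where pw: "(pp, w) \<in> ?Pats" "\<forall>i\<in>I. case_sum k1 k2 i = pattern_exp pp w t i"
      by (rule patterned_balanced_patterns)
    have "pattern_exp pp w t (Inl j) = k1 j" if "j \<in> J1" for j
      using bspec[OF pw(2), of "Inl j"] InlI[OF that, of J2] by (simp add: I_def)
    then have "of_nat n = a0 + (\<Sum>j\<in>J1. a j * of_nat q ^ pattern_exp pp w t (Inl j))"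
      using k1 by (simp cong: sum.cong)
    with pw(1) show "n \<in> (\<Union>(pp, w) \<in> ?Pats. ?piece pp w)"
      using piece by blast
  next
    fix n assume "n \<in> (\<Union>(pp, w) \<in> ?Pats. ?piece pp w)"
    then obtain pp w where pw: "(pp, w) \<in> ?Pats" and "n \<in> ?piece pp w"
      by blast
    then obtain t where t: "of_nat n = a0 + (\<Sum>j\<in>J1. a j * of_nat q ^ pattern_exp pp w t (Inl j))"
      using piece by blast
    have "(a0 - b0) + (\<Sum>i\<in>I. e i * of_nat q ^ pattern_exp pp w t i) = 0"
      using pw by (intro balanced_pattern_solution[OF fin fin labels[OF pw]]) (simp add: balanced_patterns_def)
    then have "of_nat n = b0 + (\<Sum>j\<in>J2. b j * of_nat q ^ pattern_exp pp w t (Inr j))"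
      using diff[of "pattern_exp pp w t"] t by simp
    with t show "n \<in> Sq_on q J1 a0 a \<inter> Sq_on q J2 b0 b"
      unfolding Sq_on_def
      by (intro IntI CollectI exI[of _ "\<lambda>j. pattern_exp pp w t (Inl j)"] exI[of _ "\<lambda>j. pattern_exp pp w t (Inr j)"])
  qed
qed

lemma prime_power_ge_2: "prime p \<Longrightarrow> e \<ge> 1 \<Longrightarrow> p ^ e \<ge> (2::nat)"
  by (metis One_nat_def order.trans power_increasing power_one_right prime_ge_2_nat prime_gt_0_nat
      Suc_leI)

lemma p_nested_Sq_on_Int_same_base:
  fixes J1 :: "'a set" and J2 :: "'b set"
  assumes "prime p" "e \<ge> 1" "finite J1" "finite J2"
    and "admissible (p ^ e) J1 a0 a" "admissible (p ^ e) J2 b0 b" "card J1 \<le> k"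
  shows "p_nested p k (Sq_on (p ^ e) J1 a0 a \<inter> Sq_on (p ^ e) J2 b0 b)"
proof -
  let ?q = "p ^ e" and ?I = "J1 <+> J2" and ?e = "case_sum a (\<lambda>j. - b j)"
  have "\<forall>i\<in>?I. (of_nat ?q - 1) * ?e i \<in> \<int>"
    using assms(5,6) by (auto simp: admissible_def)
  moreover have "(of_nat ?q - 1) * (a0 - b0) \<in> \<int>"
    using admissible_const_Ints[OF assms(5,3)] admissible_const_Ints[OF assms(6,4)]
    by (simp add: right_diff_distrib)
  moreover have "finite ?I"
    using assms(3,4) by simp
  ultimately obtain B where B: "pattern_bound ?q ?I ?e (a0 - b0) B"
    using pattern_bound_exists_Ints[OF _ prime_power_ge_2[OF assms(1,2)]] by blast
  have "finite (balanced_patterns ?q ?I ?e (a0 - b0) B)"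
    using assms(3,4) by (simp add: finite_balanced_patterns)
  moreover have "p_nested p k (Sq_on ?q ?I (a0 + cluster_sum ?q J1 a (pp \<circ> Inl) (w \<circ> Inl) None)
      (\<lambda>C. cluster_sum ?q J1 a (pp \<circ> Inl) (w \<circ> Inl) (Some C)))"
    if "(pp, w) \<in> balanced_patterns ?q ?I ?e (a0 - b0) B" for pp w
  proof (rule p_nested_Sq_on[OF assms(2)])
    show "finite ?I"
      using assms(3,4) by simp
    show "admissible ?q ?I (a0 + cluster_sum ?q J1 a (pp \<circ> Inl) (w \<circ> Inl) None)
        (\<lambda>C. cluster_sum ?q J1 a (pp \<circ> Inl) (w \<circ> Inl) (Some C))"
      using that assms(3,4)
      by (intro admissible_cluster_sums[OF assms(5,3)]) (auto simp: balanced_patterns_def)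
    show "card {C\<in>?I. cluster_sum ?q J1 a (pp \<circ> Inl) (w \<circ> Inl) (Some C) \<noteq> 0} \<le> k"
      using card_nonzero_cluster_sums[OF assms(3)] assms(7) order_trans by blast
  qed
  ultimately show ?thesis
    unfolding Sq_on_Int_eq_Union_patterns[OF assms(3,4) B] by (intro p_nested_Union) auto
qed

lemma p_nested_UN_Int_UN:
  assumes "finite X" "finite Y" "\<And>x y. x \<in> X \<Longrightarrow> y \<in> Y \<Longrightarrow> p_nested p k (f x \<inter> g y)"
  shows "p_nested p k ((\<Union>x\<in>X. f x) \<inter> (\<Union>y\<in>Y. g y))"
proof -
  have "(\<Union>x\<in>X. f x) \<inter> (\<Union>y\<in>Y. g y) = \<Union>((\<lambda>(x, y). f x \<inter> g y) ` (X \<times> Y))"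
    by auto
  also have "p_nested p k \<dots>"
    using assms by (intro p_nested_Union) auto
  finally show ?thesis .
qed

lemma p_nested_Sq_on_Int:
  fixes J1 :: "'a set" and J2 :: "'b set"
  assumes "prime p" "e1 \<ge> 1" "e2 \<ge> 1" "finite J1" "finite J2"
    and "admissible (p ^ e1) J1 a0 a" "admissible (p ^ e2) J2 b0 b" "card J1 \<le> k"
  shows "p_nested p k (Sq_on (p ^ e1) J1 a0 a \<inter> Sq_on (p ^ e2) J2 b0 b)"
proof -
  have S1: "Sq_on (p ^ e1) J1 a0 a =
      (\<Union>ch \<in> J1 \<rightarrow>\<^sub>E {..<e2}. Sq_on (p ^ (e1 * e2)) J1 a0 (\<lambda>j. a j * of_nat (p ^ e1) ^ ch j))"
    unfolding power_mult by (rule Sq_on_base_power[OF assms(3,4)])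
  have S2: "Sq_on (p ^ e2) J2 b0 b =
      (\<Union>ch \<in> J2 \<rightarrow>\<^sub>E {..<e1}. Sq_on (p ^ (e1 * e2)) J2 b0 (\<lambda>j. b j * of_nat (p ^ e2) ^ ch j))"
    unfolding mult.commute[of e1 e2] power_mult by (rule Sq_on_base_power[OF assms(2,5)])
  show ?thesis
    unfolding S1 S2
  proof (rule p_nested_UN_Int_UN)
    show "finite (J1 \<rightarrow>\<^sub>E {..<e2})" "finite (J2 \<rightarrow>\<^sub>E {..<e1})"
      using assms(4,5) by (simp_all add: finite_PiE)
    fix ch1 ch2
    show "p_nested p k (Sq_on (p ^ (e1 * e2)) J1 a0 (\<lambda>j. a j * of_nat (p ^ e1) ^ ch1 j) \<inter>
        Sq_on (p ^ (e1 * e2)) J2 b0 (\<lambda>j. b j * of_nat (p ^ e2) ^ ch2 j))"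
    proof (rule p_nested_Sq_on_Int_same_base[OF assms(1) _ assms(4,5) _ _ assms(8)])
      show "1 \<le> e1 * e2"
        using assms(2,3) by simp
      show "admissible (p ^ (e1 * e2)) J1 a0 (\<lambda>j. a j * of_nat (p ^ e1) ^ ch1 j)"
        unfolding power_mult by (rule admissible_base_power[OF assms(6,4)])
      show "admissible (p ^ (e1 * e2)) J2 b0 (\<lambda>j. b j * of_nat (p ^ e2) ^ ch2 j)"
        unfolding mult.commute[of e1 e2] power_mult by (rule admissible_base_power[OF assms(7,5)])
    qed
  qed
qed

lemma p_nested_Int_elem:
  assumes "prime p" "elem_p_nested p r S" "r \<le> k" "elem_p_nested p r' T"
  shows "p_nested p k (S \<inter> T)"
proof -
  obtain e1 a where a: "e1 \<ge> 1" "admissible (p ^ e1) {1..r} (a 0) a" "S = Sq_on (p ^ e1) {1..r} (a 0) a"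
    using elem_p_nested_Sq_on[OF assms(2)] by metis
  obtain e2 b where b: "e2 \<ge> 1" "admissible (p ^ e2) {1..r'} (b 0) b" "T = Sq_on (p ^ e2) {1..r'} (b 0) b"
    using elem_p_nested_Sq_on[OF assms(4)] by metis
  show ?thesis
    unfolding a(3) b(3) using assms(3)
    by (intro p_nested_Sq_on_Int[OF assms(1) a(1) b(1) _ _ a(2) b(2)]) auto
qed

lemma p_nested_Int:
  assumes "prime p" "p_nested p k B1" "p_nested p k B2"
  shows "p_nested p k (B1 \<inter> B2)"
proof (rule p_nested_Int_if_elem_Int[OF assms(2)])
  fix S r assume S: "elem_p_nested p r S" "r \<le> k"
  have "p_nested p k (B2 \<inter> S)"
    by (rule p_nested_Int_if_elem_Int[OF assms(3)]) (rule p_nested_Int_elem[OF assms(1)], use S in auto)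
  then show "p_nested p k (S \<inter> B2)"
    by (simp add: Int_commute)
qed

section \<open>Intersections with residue classes\<close>

lemma power_mod_repeats:
  fixes q N :: nat
  assumes "N \<ge> 1"
  obtains k1 k2 where "k1 < k2" "q ^ k1 mod N = q ^ k2 mod N"
proof -
  have "\<not> inj_on (\<lambda>k. q ^ k mod N) {..N}"
  proof
    assume "inj_on (\<lambda>k. q ^ k mod N) {..N}"
    then have "card ((\<lambda>k. q ^ k mod N) ` {..N}) = Suc N"
      by (simp add: card_image)
    moreover have "card ((\<lambda>k. q ^ k mod N) ` {..N}) \<le> card {..<N}"
      using assms by (intro card_mono) auto
    ultimately show False
      by simp
  qed
  then show thesis
    unfolding inj_on_def by (metis that linorder_neqE_nat)
qed

lemma power_mod_eventually_periodic:
  fixes q N :: nat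
  assumes "N \<ge> 1"
  obtains P T0 where "P \<ge> 1" "\<And>s u. T0 \<le> s \<Longrightarrow> q ^ (s + P * u) mod N = q ^ s mod N"
proof -
  obtain k1 k2 where k: "k1 < k2" "q ^ k1 mod N = q ^ k2 mod N"
    using power_mod_repeats[OF assms] by blast
  have step: "q ^ (s + (k2 - k1)) mod N = q ^ s mod N" if "k1 \<le> s" for s
  proof -
    have "q ^ (s + (k2 - k1)) = q ^ (s - k1) * q ^ k2" "q ^ s = q ^ (s - k1) * q ^ k1"
      using that k(1) by (simp_all flip: power_add)
    then show ?thesis
      using k(2) by (metis mod_mult_right_eq)
  qed
  have "q ^ (s + (k2 - k1) * u) mod N = q ^ s mod N" if "k1 \<le> s" for s u
  proof (induction u)
    case (Suc u)
    have "s + (k2 - k1) * Suc u = (s + (k2 - k1) * u) + (k2 - k1)"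
      by simp
    moreover have "k1 \<le> s + (k2 - k1) * u"
      using that by simp
    ultimately have "q ^ (s + (k2 - k1) * Suc u) mod N = q ^ (s + (k2 - k1) * u) mod N"
      using step by presburger
    then show ?case
      using Suc by simp
  qed simp
  with k(1) show thesis
    by (intro that[of "k2 - k1" k1]) auto
qed

lemma rat_quotient_Ints_imp_mod_eq:
  assumes "n \<ge> 1" "(of_nat x - of_nat y) / of_nat n \<in> (\<int> :: rat set)"
  shows "x mod n = y mod n"
proof -
  obtain z where "(of_nat x - of_nat y) / of_nat n = (of_int z :: rat)"
    using assms(2) by (elim Ints_cases)
  then have "of_int (int x - int y) = (of_int (int n * z) :: rat)"
    using assms(1) by (simp add: field_simps)
  then have "int n dvd int x - int y"
    by (simp only: of_int_eq_iff) simp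
  then have "int x mod int n = int y mod int n"
    by (simp add: mod_eq_dvd_iff)
  then show ?thesis
    by (simp flip: of_nat_mod)
qed

lemma periodic_power_diff:
  assumes "q \<ge> 1" "T \<le> s"
    and "\<And>s u. T \<le> s \<Longrightarrow> q ^ (s + P * u) mod ((q - 1) * n) = q ^ s mod ((q - 1) * n)"
  obtains w :: nat where "(of_nat q :: rat) ^ s * (of_nat (q ^ P) ^ u - 1) = (of_nat q - 1) * of_nat n * of_nat w"
proof -
  have le: "q ^ s \<le> q ^ (s + P * u)"
    using assms(1) by (intro power_increasing) auto
  then have "(q - 1) * n dvd q ^ (s + P * u) - q ^ s"
    using assms(3)[OF assms(2), of u] by (simp add: mod_eq_dvd_iff_nat)
  then obtain w where w: "q ^ (s + P * u) - q ^ s = (q - 1) * n * w"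
    by blast
  have "(of_nat q :: rat) ^ s * (of_nat (q ^ P) ^ u - 1) = of_nat (q ^ (s + P * u) - q ^ s)"
    using le by (simp add: of_nat_diff power_add power_mult algebra_simps)
  also have "\<dots> = (of_nat q - 1) * of_nat n * of_nat w"
    unfolding w using assms(1) by (simp add: of_nat_diff)
  finally show thesis
    by (rule that)
qed

text \<open>Raising the exponents \<open>s j \<ge> T\<close> by multiples of the period \<open>P\<close> changes an element of
  \<open>S\<^sub>q\<close> by a multiple of \<open>n\<close>.\<close>
lemma Sq_on_mod_eq:
  fixes c :: "'j \<Rightarrow> rat"
  assumes "n \<ge> 1" "q \<ge> 1" "\<forall>j\<in>J. (of_nat q - 1) * c j \<in> \<int> \<and> T \<le> s j"
    and per: "\<And>s u. T \<le> s \<Longrightarrow> q ^ (s + P * u) mod ((q - 1) * n) = q ^ s mod ((q - 1) * n)"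
    and "x \<in> Sq_on (q ^ P) J d0 (\<lambda>j. c j * of_nat q ^ s j)" "y \<in> Sq_on (q ^ P) J d0 (\<lambda>j. c j * of_nat q ^ s j)"
  shows "x mod n = y mod n"
proof -
  define v0 where "v0 = d0 + (\<Sum>j\<in>J. c j * of_nat q ^ s j)"
  have key: "(of_nat z - v0) / of_nat n \<in> \<int>" if z: "z \<in> Sq_on (q ^ P) J d0 (\<lambda>j. c j * of_nat q ^ s j)" for z
  proof -
    obtain u where u: "of_nat z = d0 + (\<Sum>j\<in>J. c j * of_nat q ^ s j * of_nat (q ^ P) ^ u j)"
      using z unfolding Sq_on_def mem_Collect_eq by blast
    have "(of_nat z - v0) / of_nat n = (\<Sum>j\<in>J. c j * (of_nat q ^ s j * (of_nat (q ^ P) ^ u j - 1)) / of_nat n)"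
      unfolding u v0_def by (simp add: sum_divide_distrib[symmetric] sum_subtractf[symmetric] algebra_simps)
    also have "\<dots> \<in> \<int>"
    proof (rule Ints_sum)
      fix j assume j: "j \<in> J"
      then obtain w :: nat where w: "(of_nat q :: rat) ^ s j * (of_nat (q ^ P) ^ u j - 1) = (of_nat q - 1) * of_nat n * of_nat w"
        using periodic_power_diff[OF assms(2) _ per] assms(3) by blast
      have "c j * (of_nat q ^ s j * (of_nat (q ^ P) ^ u j - 1)) / of_nat n = ((of_nat q - 1) * c j) * of_nat w"
        unfolding w using assms(1) by (simp add: field_simps)
      also have "\<dots> \<in> \<int>"
        by (rule Ints_mult) (use assms(3) j in auto)
      finally show "c j * (of_nat q ^ s j * (of_nat (q ^ P) ^ u j - 1)) / of_nat n \<in> \<int>" .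
    qed
    finally show ?thesis .
  qed
  have "(of_nat x - of_nat y) / of_nat n = (of_nat x - v0) / of_nat n - (of_nat y - v0) / of_nat n"
    by (simp add: diff_divide_distrib)
  also have "\<dots> \<in> (\<int> :: rat set)"
    using key assms(5,6) by (intro Ints_diff) auto
  finally show ?thesis
    by (rule rat_quotient_Ints_imp_mod_eq[OF assms(1)])
qed

lemma p_nested_Int_residue_class_if_mod_eq:
  assumes "p_nested p k X" "\<And>x y. x \<in> X \<Longrightarrow> y \<in> X \<Longrightarrow> x mod n = y mod n"
  shows "p_nested p k (X \<inter> {x. x mod n = r})"
proof (cases "\<exists>y\<in>X. y mod n = r")
  case True
  then obtain y where "y \<in> X" "y mod n = r"
    by blast
  then have "X \<inter> {x. x mod n = r} = X"
    using assms(2) by blast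
  then show ?thesis
    using assms(1) by simp
next
  case False
  then have "X \<inter> {x. x mod n = r} = {}"
    by blast
  then show ?thesis
    by (simp add: p_nested_finite)
qed

lemma p_nested_Sq_on_split_exponents:
  assumes "e \<ge> 1" "P \<ge> 1" "finite J" "admissible (p ^ e) J c0 c" "card J \<le> k"
  shows "p_nested p k (Sq_on ((p ^ e) ^ P) {j\<in>J. T0 \<le> ch j}
    (c0 + (\<Sum>j\<in>{j\<in>J. ch j < T0}. c j * of_nat (p ^ e) ^ ch j)) (\<lambda>j. c j * of_nat (p ^ e) ^ ch j))"
  unfolding power_mult[symmetric]
proof (rule p_nested_Sq_on)
  show "1 \<le> e * P"
    using assms(1,2) by simp
  show "finite {j\<in>J. T0 \<le> ch j}"
    using assms(3) by simp
  show "admissible (p ^ (e * P)) {j\<in>J. T0 \<le> ch j}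
      (c0 + (\<Sum>j\<in>{j\<in>J. ch j < T0}. c j * of_nat (p ^ e) ^ ch j)) (\<lambda>j. c j * of_nat (p ^ e) ^ ch j)"
    unfolding power_mult by (rule admissible_split_exponents[OF assms(4,3)])
  have "card {j\<in>{j\<in>J. T0 \<le> ch j}. c j * of_nat (p ^ e) ^ ch j \<noteq> 0} \<le> card J"
    using assms(3) by (intro card_mono) auto
  then show "card {j\<in>{j\<in>J. T0 \<le> ch j}. c j * of_nat (p ^ e) ^ ch j \<noteq> 0} \<le> k"
    using assms(5) by simp
qed

lemma p_nested_Sq_on_Int_residue_class:
  assumes "prime p" "e \<ge> 1" "finite J" "admissible (p ^ e) J c0 c" "card J \<le> k" "n \<ge> 1"
  shows "p_nested p k (Sq_on (p ^ e) J c0 c \<inter> {x. x mod n = r})"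
proof -
  let ?q = "p ^ e"
  have q: "?q \<ge> 2"
    by (rule prime_power_ge_2[OF assms(1,2)])
  then have "(?q - 1) * n \<ge> 1"
    using assms(6) by simp
  then obtain T0 P where P: "P \<ge> 1"
    and per: "\<And>s u. T0 \<le> s \<Longrightarrow> ?q ^ (s + P * u) mod ((?q - 1) * n) = ?q ^ s mod ((?q - 1) * n)"
    using power_mod_eventually_periodic[of "(?q - 1) * n" ?q] by blast
  let ?piece = "\<lambda>ch. Sq_on (?q ^ P) {j\<in>J. T0 \<le> ch j} (c0 + (\<Sum>j\<in>{j\<in>J. ch j < T0}. c j * of_nat ?q ^ ch j))
    (\<lambda>j. c j * of_nat ?q ^ ch j)"
  have piece: "p_nested p k (?piece ch \<inter> {x. x mod n = r})" for ch
  proof (rule p_nested_Int_residue_class_if_mod_eq)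
    show "p_nested p k (?piece ch)"
      by (rule p_nested_Sq_on_split_exponents[OF assms(2) P assms(3-5)])
    show "x mod n = y mod n" if "x \<in> ?piece ch" "y \<in> ?piece ch" for x y
      using assms(4) that q per
      by (intro Sq_on_mod_eq[OF assms(6), where q = ?q and T = T0 and s = ch and P = P])
        (auto simp: admissible_def)
  qed
  have "finite (J \<rightarrow>\<^sub>E {..<T0 + P})"
    using assms(3) by (simp add: finite_PiE)
  then have "p_nested p k (\<Union>ch \<in> J \<rightarrow>\<^sub>E {..<T0 + P}. ?piece ch \<inter> {x. x mod n = r})"
    using piece by (intro p_nested_Union) auto
  moreover have "Sq_on ?q J c0 c \<inter> {x. x mod n = r} =
      (\<Union>ch \<in> J \<rightarrow>\<^sub>E {..<T0 + P}. ?piece ch \<inter> {x. x mod n = r})"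
    unfolding Sq_on_split_exponents[OF P assms(3), of ?q c0 c T0] by blast
  ultimately show ?thesis
    by (simp only:)
qed

lemma p_nested_Int_residue_class:
  assumes "prime p" "p_nested p k B" "n \<ge> 1"
  shows "p_nested p k (B \<inter> {x. x mod n = r})"
proof (rule p_nested_Int_if_elem_Int[OF assms(2)])
  fix S r' assume "elem_p_nested p r' S" "r' \<le> k"
  then obtain e c where "e \<ge> 1" "admissible (p ^ e) {1..r'} (c 0) c" "S = Sq_on (p ^ e) {1..r'} (c 0) c"
    "r' \<le> k"
    using elem_p_nested_Sq_on by metis
  then show "p_nested p k (S \<inter> {x. x mod n = r})"
    using p_nested_Sq_on_Int_residue_class[OF assms(1) _ _ _ _ assms(3), of e "{1..r'}" "c 0" c k r]
    by simp
qed

section \<open>Arithmetic progressions and \<open>p\<close>-normal sets\<close>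

lemma arith_prog_eq_residue_class:
  fixes m n :: nat
  assumes "n \<ge> 1"
  shows "{m + n * j | j. True} = {x. x mod n = m mod n} \<inter> {m..}"
proof (intro set_eqI iffI)
  fix x assume "x \<in> {x. x mod n = m mod n} \<inter> {m..}"
  then have "n dvd x - m"
    using mod_eq_dvd_iff_nat[of m x n] by simp
  then obtain j where "x - m = n * j"
    by blast
  with \<open>x \<in> {x. x mod n = m mod n} \<inter> {m..}\<close> show "x \<in> {m + n * j | j. True}"
    by (intro CollectI exI[of _ j]) auto
qed auto

lemma inf_arith_prog_residue_class:
  assumes "inf_arith_prog A"
  obtains m n where "n \<ge> 1" "A = {x. x mod n = m mod n} \<inter> {m..}"
  using assms arith_prog_eq_residue_class unfolding inf_arith_prog_def by metis

lemma inf_arith_prog_Int: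
  assumes "inf_arith_prog A1" "inf_arith_prog A2" "A1 \<inter> A2 \<noteq> {}"
  shows "inf_arith_prog (A1 \<inter> A2)"
proof -
  obtain m1 n1 where A1: "n1 \<ge> 1" "A1 = {x. x mod n1 = m1 mod n1} \<inter> {m1..}"
    using assms(1) by (rule inf_arith_prog_residue_class)
  obtain m2 n2 where A2: "n2 \<ge> 1" "A2 = {x. x mod n2 = m2 mod n2} \<inter> {m2..}"
    using assms(2) by (rule inf_arith_prog_residue_class)
  define x0 where "x0 = (LEAST x. x \<in> A1 \<inter> A2)"
  obtain y where "y \<in> A1 \<inter> A2"
    using assms(3) by blast
  then have x0: "x0 \<in> A1 \<inter> A2"
    unfolding x0_def by (rule LeastI)
  have x0_le: "x0 \<le> x" if "x \<in> A1 \<inter> A2" for x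
    unfolding x0_def using that by (rule Least_le)
  define L where "L = lcm n1 n2"
  have "A1 \<inter> A2 = {x0 + L * j | j. True}"
  proof (intro set_eqI iffI)
    fix x assume x: "x \<in> A1 \<inter> A2"
    then have "x mod n1 = x0 mod n1" "x mod n2 = x0 mod n2"
      using x0 A1(2) A2(2) by auto
    then have "n1 dvd x - x0" "n2 dvd x - x0"
      using mod_eq_dvd_iff_nat[OF x0_le[OF x]] by auto
    then obtain j where "x - x0 = L * j"
      unfolding L_def by (meson dvdE lcm_least)
    then show "x \<in> {x0 + L * j | j. True}"
      using x0_le[OF x] by (intro CollectI exI[of _ j]) auto
  next
    fix x assume "x \<in> {x0 + L * j | j. True}"
    then obtain j where x: "x = x0 + L * j"
      by blast
    have "x mod n1 = x0 mod n1" "x mod n2 = x0 mod n2"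
      unfolding x L_def by (simp_all add: mod_add_right_eq[symmetric] mult.assoc)
    then show "x \<in> A1 \<inter> A2"
      using x0 x A1(2) A2(2) by auto
  qed
  moreover have "L \<ge> 1"
    using A1(1) A2(1) by (simp add: L_def Suc_le_eq lcm_pos_nat)
  ultimately show ?thesis
    unfolding inf_arith_prog_def by blast
qed

definition almost_p_nested :: "nat \<Rightarrow> nat \<Rightarrow> nat set \<Rightarrow> bool" where
  "almost_p_nested p k S \<longleftrightarrow> (\<exists>B. p_nested p k B \<and> S \<subseteq> B \<and> finite (B - S))"

lemma almost_p_nestedI: "p_nested p k S \<Longrightarrow> almost_p_nested p k S"
  unfolding almost_p_nested_def by (intro exI[of _ S]) simp

lemma almost_p_nested_Un:
  assumes "almost_p_nested p k S" "almost_p_nested p k T"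
  shows "almost_p_nested p k (S \<union> T)"
proof -
  obtain B C where "p_nested p k B" "S \<subseteq> B" "finite (B - S)" "p_nested p k C" "T \<subseteq> C" "finite (C - T)"
    using assms unfolding almost_p_nested_def by blast
  moreover have "B \<union> C - (S \<union> T) \<subseteq> (B - S) \<union> (C - T)"
    by blast
  ultimately show ?thesis
    unfolding almost_p_nested_def by (meson finite_UnI finite_subset p_nested_Un Un_mono)
qed

lemma almost_p_nested_UN:
  assumes "finite X" "\<And>x. x \<in> X \<Longrightarrow> almost_p_nested p k (f x)"
  shows "almost_p_nested p k (\<Union>x\<in>X. f x)"
  using assms
proof (induction X rule: finite_induct)
  case empty
  show ?case
    by (simp add: almost_p_nestedI p_nested_finite)
next
  case (insert x X)
  then show ?case
    by (simp add: almost_p_nested_Un)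
qed

lemma almost_p_nested_Int_arith_prog:
  assumes "prime p" "p_nested p k B" "inf_arith_prog A"
  shows "almost_p_nested p k (B \<inter> A)"
proof -
  obtain m n where A: "n \<ge> 1" "A = {x. x mod n = m mod n} \<inter> {m..}"
    using assms(3) by (rule inf_arith_prog_residue_class)
  have "p_nested p k (B \<inter> {x. x mod n = m mod n})"
    by (rule p_nested_Int_residue_class[OF assms(1,2) A(1)])
  moreover have "B \<inter> {x. x mod n = m mod n} - B \<inter> A \<subseteq> {..<m}"
    using A(2) by auto
  ultimately show ?thesis
    unfolding almost_p_nested_def using A(2) by (blast intro: finite_subset)
qed

lemma almost_p_nested_Int_Union_arith_progs:
  assumes "prime p" "p_nested p k B" "finite As" "\<forall>A\<in>As. inf_arith_prog A"
  shows "almost_p_nested p k (B \<inter> \<Union>As)"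
  unfolding Int_Union using assms by (intro almost_p_nested_UN almost_p_nested_Int_arith_prog) auto

lemma Int_Union_arith_progs:
  assumes "finite As1" "finite As2" "\<forall>A\<in>As1. inf_arith_prog A" "\<forall>A\<in>As2. inf_arith_prog A"
  obtains As where "finite As" "\<forall>A\<in>As. inf_arith_prog A" "\<Union>As = \<Union>As1 \<inter> \<Union>As2"
proof
  let ?As = "{X \<in> (\<lambda>(A1, A2). A1 \<inter> A2) ` (As1 \<times> As2). X \<noteq> {}}"
  show "finite ?As"
    using assms(1,2) by simp
  show "\<forall>A\<in>?As. inf_arith_prog A"
    using assms(3,4) by (auto intro: inf_arith_prog_Int)
  show "\<Union>?As = \<Union>As1 \<inter> \<Union>As2"
    by auto
qed

lemma finite_sym_diff_Int:
  assumes "finite (sym_diff S1 T1)" "finite (sym_diff S2 T2)"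
  shows "finite (sym_diff (S1 \<inter> S2) (T1 \<inter> T2))"
  by (rule finite_subset[of _ "sym_diff S1 T1 \<union> sym_diff S2 T2"]) (use assms in auto)

lemma p_normal_if_almost_p_nested:
  assumes "almost_p_nested p k C" "finite As" "\<forall>A\<in>As. inf_arith_prog A"
    and "finite (sym_diff S (C \<union> \<Union>As))"
  shows "p_normal p k S"
proof -
  obtain B where B: "p_nested p k B" "C \<subseteq> B" "finite (B - C)"
    using assms(1) unfolding almost_p_nested_def by blast
  have "sym_diff S (B \<union> \<Union>As) \<subseteq> sym_diff S (C \<union> \<Union>As) \<union> (B - C)"
    using B(2) by blast
  then have "finite (sym_diff S (B \<union> \<Union>As))"
    using assms(4) B(3) by (meson finite_UnI finite_subset)
  then show ?thesis
    unfolding p_normal_def using B(1) assms(2,3) by blast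
qed

theorem lemma9p5:
  fixes p d :: nat and S1 S2 :: "nat set"
  assumes "prime p"
    and "p_normal p d S1"
    and "p_normal p d S2"
  shows "p_normal p d (S1 \<inter> S2)"
proof -
  obtain B1 As1 where h1: "p_nested p d B1" "finite As1" "\<forall>A\<in>As1. inf_arith_prog A"
      "finite (sym_diff S1 (B1 \<union> \<Union>As1))"
    using assms(2) unfolding p_normal_def by blast
  obtain B2 As2 where h2: "p_nested p d B2" "finite As2" "\<forall>A\<in>As2. inf_arith_prog A"
      "finite (sym_diff S2 (B2 \<union> \<Union>As2))"
    using assms(3) unfolding p_normal_def by blast
  obtain As where As: "finite As" "\<forall>A\<in>As. inf_arith_prog A" "\<Union>As = \<Union>As1 \<inter> \<Union>As2"
    using Int_Union_arith_progs[OF h1(2) h2(2) h1(3) h2(3)] by blast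
  let ?C = "(B1 \<inter> B2) \<union> (B1 \<inter> \<Union>As2) \<union> (B2 \<inter> \<Union>As1)"
  have "almost_p_nested p d ?C"
    using almost_p_nested_Int_Union_arith_progs[OF assms(1) h1(1) h2(2,3)]
      almost_p_nested_Int_Union_arith_progs[OF assms(1) h2(1) h1(2,3)]
    by (intro almost_p_nested_Un almost_p_nestedI[OF p_nested_Int[OF assms(1) h1(1) h2(1)]])
  moreover have "(B1 \<union> \<Union>As1) \<inter> (B2 \<union> \<Union>As2) = ?C \<union> \<Union>As"
    using As(3) by blast
  then have "finite (sym_diff (S1 \<inter> S2) (?C \<union> \<Union>As))"
    using finite_sym_diff_Int[OF h1(4) h2(4)] by simp
  ultimately show ?thesis
    by (rule p_normal_if_almost_p_nested[OF _ As(1,2)])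
qed

end
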